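(* Let $i\in[n]$, let $S^\ast\subseteq[n]\setminus\{i\}$, and let $\mathcal{G}$ be a DAG on $[n]$ such that the induced subgraph $\mathcal{G}|_{S^\ast}$ has no edges. Let $\mathcal{H}$ be the graph identical to $\mathcal{G}$ but with all the edges $j\to i$ for $j\in S^\ast$. If $\mathcal{H}$ is a DAG, then $\operatorname{conv}(c_\mathcal{G},c_\mathcal{H})$ is an edge of $\mathrm{CIM}_n$.
   Context: For a directed acyclic graph (DAG) $\mathcal{G}$ on vertex set $[n]=\{1,\dots,n\}$, the characteristic imset $c_\mathcal{G}$ is the 0/1-vector indexed by the subsets $S\subseteq[n]$ with $|S|\geq 2$, with $c_\mathcal{G}(S)=1$ if there exists $i\in S$ such that $S\subseteq \mathrm{pa}_\mathcal{G}(i)\cup\{i\}$ (where $\mathrm{pa}_\mathcal{G}(i)$ is the set of parents of $i$), and $c_\mathcal{G}(S)=0$ otherwise. The characteristic imset polytope is $\mathrm{CIM}_n=\operatorname{conv}(c_\mathcal{G}\colon \mathcal{G}\text{ a DAG on }[n])$. *)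

theory Defs
  imports "HOL-Analysis.Analysis"
begin

text \<open>The vertex set [n] is represented by a finite type 'n (n = CARD('n)).
  A directed graph is an edge relation E :: ('n \<times> 'n) set, (j,i) \<in> E meaning j \<rightarrow> i.\<close>

definition is_dag :: "('n \<times> 'n) set \<Rightarrow> bool" where
  "is_dag E \<longleftrightarrow> acyclic E"

definition pa :: "('n \<times> 'n) set \<Rightarrow> 'n \<Rightarrow> 'n set" where
  "pa E i = {j. (j, i) \<in> E}"

text \<open>Coordinates are indexed by all subsets of [n]; the coordinates
  with card S < 2 (not part of the paper's vector) are fixed to 0, an injective affine
  embedding of the paper's space which preserves the face structure.\<close>
definition char_imset :: "('n::finite \<times> 'n) set \<Rightarrow> real ^ ('n set)" where
  "char_imset E = (\<chi> S. if 2 \<le> card S \<and> (\<exists>i\<in>S. S \<subseteq> pa E i \<union> {i}) then 1 else 0)"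

definition CIM :: "(real ^ ('n::finite set)) set" where
  "CIM = convex hull {char_imset E | E :: ('n \<times> 'n) set. is_dag E}"

definition is_edge_of :: "'a::euclidean_space set \<Rightarrow> 'a set \<Rightarrow> bool" where
  "is_edge_of F P \<longleftrightarrow> F face_of P \<and> aff_dim F = 1"

end

theory Submission
  imports Defs
begin

text \<open>
  The segment is cut out of CIM by a supporting hyperplane built lexicographically from
  two functionals. The first rewards agreement with c_G on the coordinates where c_G and
  c_H coincide; among the vertices of CIM it is maximal exactly at the DAGs E agreeing
  with G there. This pins down most adjacencies of E, and the remaining freedom sits at
  the vertices x of X = Sstar - pa_G(i), each of which E may treat as G does or as H
  does. The second functional adds a 0/1 indicator of "x is treated as in H" with a
  consistency penalty, and a pair term 2 c(W x y) - c({i, x, y}). If k of the m vertices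
  of X are treated as in H, the functional exceeds its value at c_G by at most
  k (k - 1) - (m - 1) k <= 0, and equality forces all vertices to be treated alike and
  consistently. As the characteristic imset of a DAG is determined by its coordinates of
  size 2 and 3, this leaves only c_G and c_H. Covered edges i -> b are reversed first,
  which changes neither c_G nor H (Chickering).
\<close>

section \<open>Families and characteristic imsets\<close>

definition in_family :: "('n \<times> 'n) set \<Rightarrow> 'n set \<Rightarrow> bool" where
  "in_family E S \<longleftrightarrow> (\<exists>k\<in>S. S \<subseteq> pa E k \<union> {k})"

definition adjacent :: "('n \<times> 'n) set \<Rightarrow> 'n \<Rightarrow> 'n \<Rightarrow> bool" where
  "adjacent E u v \<longleftrightarrow> (u, v) \<in> E \<or> (v, u) \<in> E"

lemma char_imset_nth: "char_imset E $ S = (if 2 \<le> card S \<and> in_family E S then 1 else 0)"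
  by (simp add: char_imset_def in_family_def)

lemma char_imset_nth_01: "char_imset E $ S \<in> {0, 1}"
  by (simp add: char_imset_nth)

lemma in_family_iff: "in_family E S \<longleftrightarrow> (\<exists>k\<in>S. \<forall>z\<in>S. z \<noteq> k \<longrightarrow> (z, k) \<in> E)"
  by (auto simp: in_family_def pa_def)

lemma in_familyI: "k \<in> S \<Longrightarrow> (\<And>z. z \<in> S \<Longrightarrow> z \<noteq> k \<Longrightarrow> (z, k) \<in> E) \<Longrightarrow> in_family E S"
  unfolding in_family_iff by blast

lemma char_imset_nth_eq_in_family:
  fixes E :: "('n::finite \<times> 'n) set"
  assumes "a \<in> S" "b \<in> S" "a \<noteq> b"
  shows "char_imset E $ S = (if in_family E S then 1 else 0)"
proof -
  have "card {a, b} \<le> card S"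
    using assms by (intro card_mono) auto
  then show ?thesis
    using assms by (simp add: char_imset_nth)
qed

lemma in_family_doubleton_iff: "u \<noteq> v \<Longrightarrow> in_family E {u, v} \<longleftrightarrow> adjacent E u v"
  by (auto simp: in_family_iff adjacent_def)

lemma char_imset_doubleton:
  fixes E :: "('n::finite \<times> 'n) set"
  shows "u \<noteq> v \<Longrightarrow> char_imset E $ {u, v} = (if adjacent E u v then 1 else 0)"
  by (simp add: char_imset_nth_eq_in_family[of u _ v] in_family_doubleton_iff)

lemma in_family_iff_parents_of:
  assumes "w \<in> S" and no_other_sink: "\<And>k. k \<in> S \<Longrightarrow> k \<noteq> w \<Longrightarrow> \<exists>z\<in>S. z \<noteq> k \<and> (z, k) \<notin> E"
  shows "in_family E S \<longleftrightarrow> (\<forall>z\<in>S. z \<noteq> w \<longrightarrow> (z, w) \<in> E)"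
proof
  assume "in_family E S"
  then obtain k where k: "k \<in> S" "\<forall>z\<in>S. z \<noteq> k \<longrightarrow> (z, k) \<in> E"
    unfolding in_family_iff by blast
  have "k = w"
  proof (rule ccontr)
    assume "k \<noteq> w"
    then obtain z where "z \<in> S" "z \<noteq> k" "(z, k) \<notin> E"
      using no_other_sink k(1) by blast
    with k(2) show False by blast
  qed
  with k show "\<forall>z\<in>S. z \<noteq> w \<longrightarrow> (z, w) \<in> E" by blast
next
  assume "\<forall>z\<in>S. z \<noteq> w \<longrightarrow> (z, w) \<in> E"
  with assms(1) show "in_family E S"
    unfolding in_family_iff by blast
qed

lemma acyclic_no_loop: "acyclic E \<Longrightarrow> (x, x) \<notin> E"
  unfolding acyclic_def by blast

lemma acyclic_no_2cycle: "acyclic E \<Longrightarrow> (x, y) \<in> E \<Longrightarrow> (y, x) \<notin> E"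
  unfolding acyclic_def by (meson r_into_trancl trancl_into_trancl)

lemma acyclic_no_3cycle: "acyclic E \<Longrightarrow> (x, y) \<in> E \<Longrightarrow> (y, z) \<in> E \<Longrightarrow> (z, x) \<notin> E"
  unfolding acyclic_def by (meson r_into_trancl trancl_into_trancl)

lemma acyclic_exists_sink:
  fixes E :: "('n::finite \<times> 'n) set"
  assumes "acyclic E" "S \<noteq> {}"
  obtains s where "s \<in> S" "\<And>z. z \<in> S \<Longrightarrow> (s, z) \<notin> E"
proof -
  have "wf (E\<inverse>)"
    using assms(1) by (intro finite_acyclic_wf) simp_all
  then show ?thesis
    using assms(2) that unfolding wf_eq_minimal by blast
qed

lemma in_family_triangle:
  fixes E :: "('n::finite \<times> 'n) set"
  assumes "acyclic E" "adjacent E a b" "adjacent E a c" "adjacent E b c"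
  shows "in_family E {a, b, c}"
proof -
  obtain s where "s \<in> {a, b, c}" "\<And>z. z \<in> {a, b, c} \<Longrightarrow> (s, z) \<notin> E"
    using acyclic_exists_sink[OF assms(1), of "{a, b, c}"] by blast
  then show ?thesis
    using assms(2-4) by (intro in_familyI[of s]) (auto simp: adjacent_def)
qed

text \<open>The right-hand side makes every other vertex of S a parent of a sink s of S,
  since a pair or triple through k and s can lie in a family only with sink s.\<close>
lemma in_family_iff_small_subsets:
  fixes E :: "('n::finite \<times> 'n) set"
  assumes "acyclic E"
  shows "in_family E S \<longleftrightarrow> (\<exists>k\<in>S. (\<forall>a\<in>S. a \<noteq> k \<longrightarrow> in_family E {a, k}) \<and>
            (\<forall>a\<in>S. \<forall>b\<in>S. a \<noteq> k \<longrightarrow> b \<noteq> k \<longrightarrow> a \<noteq> b \<longrightarrow> in_family E {a, b, k}))"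
    (is "_ \<longleftrightarrow> (\<exists>k\<in>S. ?local k)")
proof
  assume "in_family E S"
  then obtain k where "k \<in> S" "\<forall>z\<in>S. z \<noteq> k \<longrightarrow> (z, k) \<in> E"
    unfolding in_family_iff by blast
  then show "\<exists>k\<in>S. ?local k"
    by (intro bexI[of _ k]) (auto intro: in_familyI[of k])
next
  assume "\<exists>k\<in>S. ?local k"
  then obtain k where "k \<in> S" and pair_k: "\<forall>a\<in>S. a \<noteq> k \<longrightarrow> in_family E {a, k}"
    and triple_k: "\<forall>a\<in>S. \<forall>b\<in>S. a \<noteq> k \<longrightarrow> b \<noteq> k \<longrightarrow> a \<noteq> b \<longrightarrow> in_family E {a, b, k}"
    by (elim bexE conjE)
  obtain s where s: "s \<in> S" "\<And>z. z \<in> S \<Longrightarrow> (s, z) \<notin> E"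
    using acyclic_exists_sink[OF assms, of S] \<open>k \<in> S\<close> by blast
  have "(a, s) \<in> E" if a: "a \<in> S" "a \<noteq> s" for a
  proof (cases "a = k \<or> s = k")
    case True
    then have "in_family E {a, s} \<or> in_family E {s, a}"
      using pair_k a s(1) by auto
    then have "adjacent E a s"
      using a(2) in_family_doubleton_iff[of a s E] in_family_doubleton_iff[of s a E]
      by (auto simp: adjacent_def)
    then show ?thesis
      using a s(2) by (auto simp: adjacent_def)
  next
    case False
    then have "in_family E {a, s, k}" using triple_k a s(1) by blast
    then obtain w where w: "w \<in> {a, s, k}" "\<forall>z\<in>{a, s, k}. z \<noteq> w \<longrightarrow> (z, w) \<in> E"
      unfolding in_family_iff by blast
    have "w \<in> S"
      using w(1) \<open>k \<in> S\<close> a(1) s(1) by auto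
    then have "(s, w) \<notin> E"
      using s(2) by blast
    then have "w = s"
      using w(2) by auto
    then show ?thesis using w(2) a(2) by blast
  qed
  then show "in_family E S"
    using s(1) by (rule in_familyI[rotated])
qed

lemma char_imset_eqI:
  fixes E E' :: "('n::finite \<times> 'n) set"
  assumes "acyclic E" "acyclic E'"
    and small: "\<And>S. card S = 2 \<or> card S = 3 \<Longrightarrow> char_imset E $ S = char_imset E' $ S"
  shows "char_imset E = char_imset E'"
proof -
  have small_fam: "in_family E T \<longleftrightarrow> in_family E' T" if "card T = 2 \<or> card T = 3" for T
    using small[OF that] that by (auto simp: char_imset_nth split: if_splits)
  have pair: "in_family E {a, k} \<longleftrightarrow> in_family E' {a, k}" if "a \<noteq> k" for a k
    using that small_fam by simp
  have triple: "in_family E {a, b, k} \<longleftrightarrow> in_family E' {a, b, k}"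
    if "a \<noteq> k" "b \<noteq> k" "a \<noteq> b" for a b k
    using that small_fam by simp
  have "in_family E S \<longleftrightarrow> in_family E' S" for S
    unfolding in_family_iff_small_subsets[OF assms(1), of S] in_family_iff_small_subsets[OF assms(2), of S]
    using pair triple by (intro bex_cong[OF refl] conj_cong ball_cong[OF refl] imp_cong[OF refl]) simp_all
  then show ?thesis
    by (simp add: vec_eq_iff char_imset_nth)
qed

definition covered :: "('n \<times> 'n) set \<Rightarrow> 'n \<Rightarrow> 'n \<Rightarrow> bool" where
  "covered E u v \<longleftrightarrow> (u, v) \<in> E \<and> pa E v = pa E u \<union> {u}"

lemma acyclic_reverse_covered:
  assumes "acyclic E" "covered E u v"
  shows "acyclic (insert (v, u) (E - {(u, v)}))"
proof -
  define R where "R = E - {(u, v)}"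
  have uv: "(u, v) \<in> E" "pa E v = pa E u \<union> {u}"
    using assms(2) by (auto simp: covered_def)
  have "(u, v) \<notin> R\<^sup>*"
  proof
    assume "(u, v) \<in> R\<^sup>*"
    moreover have "u \<noteq> v"
      using uv(1) acyclic_no_loop[OF assms(1)] by blast
    ultimately have "(u, v) \<in> R\<^sup>+"
      by (auto simp: rtrancl_eq_or_trancl)
    then obtain z where z: "(u, z) \<in> R\<^sup>*" "(z, v) \<in> R"
      using tranclD2 by metis
    have "(z, u) \<in> E"
      using z(2) uv(2) by (auto simp: R_def pa_def)
    moreover have "(u, z) \<in> E\<^sup>*"
      using z(1) rtrancl_mono[of R E] by (auto simp: R_def)
    ultimately have "(u, u) \<in> E\<^sup>+"
      by (rule rtrancl_into_trancl1[rotated])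
    then show False
      using assms(1) unfolding acyclic_def by blast
  qed
  moreover have "acyclic R"
    using assms(1) by (rule acyclic_subset) (auto simp: R_def)
  ultimately show ?thesis
    by (simp add: R_def)
qed

text \<open>After reversing a covered edge u \<rightarrow> v, the family of u is the old family
  of v, and the family of v is contained in it.\<close>
lemma in_family_reverse_covered:
  assumes "acyclic E" "covered E u v"
  shows "in_family (insert (v, u) (E - {(u, v)})) S \<longleftrightarrow> in_family E S"
proof -
  let ?E' = "insert (v, u) (E - {(u, v)})"
  have uv: "(u, v) \<in> E" "pa E v = pa E u \<union> {u}"
    using assms(2) by (auto simp: covered_def)
  have "u \<noteq> v" "u \<notin> pa E u"
    using uv(1) acyclic_no_loop[OF assms(1)] by (auto simp: pa_def)
  then have pa': "pa ?E' k = (if k = u then pa E u \<union> {v} else if k = v then pa E u else pa E k)" for k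
    using uv(2) by (auto simp: pa_def)
  show ?thesis
  proof
    assume "in_family ?E' S"
    then obtain k where k: "k \<in> S" "S \<subseteq> pa ?E' k \<union> {k}"
      unfolding in_family_def by blast
    consider "k = u" "v \<in> S" | "k = u" "v \<notin> S" | "k \<noteq> u"
      by blast
    then show "in_family E S"
    proof cases
      case 1
      then have "S \<subseteq> pa E v \<union> {v}" using k(2) pa' uv(2) by auto
      then show ?thesis using 1(2) unfolding in_family_def by blast
    next
      case 2
      then have "S \<subseteq> pa E u \<union> {u}" using k(2) pa' by auto
      then show ?thesis using k(1) 2(1) unfolding in_family_def by blast
    next
      case 3
      then have "S \<subseteq> pa E k \<union> {k}" using k(2) pa'[of k] uv(2) by (auto split: if_splits)
      then show ?thesis using k(1) unfolding in_family_def by blast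
    qed
  next
    assume "in_family E S"
    then obtain k where k: "k \<in> S" "S \<subseteq> pa E k \<union> {k}"
      unfolding in_family_def by blast
    consider "k = v" "u \<in> S" | "k = v" "u \<notin> S" | "k \<noteq> v"
      by blast
    then show "in_family ?E' S"
    proof cases
      case 1
      then have "S \<subseteq> pa ?E' u \<union> {u}" using k(2) pa' uv(2) by auto
      then show ?thesis using 1(2) unfolding in_family_def by blast
    next
      case 2
      then have "S \<subseteq> pa ?E' v \<union> {v}" using k(2) pa' uv(2) \<open>u \<noteq> v\<close> by auto
      then show ?thesis using k(1) 2(1) unfolding in_family_def by blast
    next
      case 3
      then have "S \<subseteq> pa ?E' k \<union> {k}" using k(2) pa'[of k] by (auto split: if_splits)
      then show ?thesis using k(1) unfolding in_family_def by blast
    qed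
  qed
qed

lemma char_imset_reverse_covered:
  assumes "acyclic E" "covered E u v"
  shows "char_imset (insert (v, u) (E - {(u, v)})) = char_imset E"
  using in_family_reverse_covered[OF assms] by (simp add: vec_eq_iff char_imset_nth)

lemma sum_mono_eq_iff:
  fixes f g :: "'a \<Rightarrow> 'b::ordered_cancel_comm_monoid_add"
  assumes "finite A" "\<And>x. x \<in> A \<Longrightarrow> f x \<le> g x"
  shows "sum f A = sum g A \<longleftrightarrow> (\<forall>x\<in>A. f x = g x)"
proof
  assume eq: "sum f A = sum g A"
  show "\<forall>x\<in>A. f x = g x"
  proof (rule ccontr)
    assume "\<not> (\<forall>x\<in>A. f x = g x)"
    then have "\<exists>a\<in>A. f a < g a"
      using assms(2) order_less_le by blast
    then have "sum f A < sum g A"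
      using assms by (intro sum_strict_mono_ex1) auto
    with eq show False by simp
  qed
qed (rule sum.cong[OF refl], simp)

lemma card_2_containing:
  assumes "card S = 2" "i \<in> S"
  obtains u where "S = {i, u}" "u \<noteq> i"
  using assms by (auto simp: card_2_iff doubleton_eq_iff)

lemma card_3_containing:
  assumes "card S = 3" "i \<in> S"
  obtains u w where "S = {i, u, w}" "u \<noteq> i" "w \<noteq> i" "u \<noteq> w"
proof -
  obtain x y z where S: "S = {x, y, z}" "x \<noteq> y" "y \<noteq> z" "x \<noteq> z"
    using assms(1) card_3_iff by metis
  then consider "i = x" | "i = y" | "i = z"
    using assms(2) by blast
  then show ?thesis
    using S that by cases (auto simp: insert_commute)
qed

lemma sum_offdiagonal_indicator:
  assumes "finite X" "K \<subseteq> X"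
  shows "(\<Sum>x\<in>X. \<Sum>y\<in>X - {x}. if x \<in> K \<and> y \<in> K then 1 else 0) = real (card K) * (real (card K) - 1)"
proof -
  have "(\<Sum>y\<in>X - {x}. if x \<in> K \<and> y \<in> K then 1 else 0) = (if x \<in> K then real (card K) - 1 else 0)"
    if "x \<in> X" for x
  proof -
    have "(X - {x}) \<inter> K = K - {x}"
      using assms(2) by blast
    then have "(\<Sum>y\<in>X - {x}. if y \<in> K then 1 else 0) = real (card (K - {x}))"
      using assms(1) by (simp add: sum.If_cases)
    then show ?thesis
      using assms(1,2) card_Diff_singleton[of x K] finite_subset[OF assms(2,1)] card_gt_0_iff[of K]
      by (auto simp: of_nat_diff)
  qed
  then have "(\<Sum>x\<in>X. \<Sum>y\<in>X - {x}. if x \<in> K \<and> y \<in> K then 1 else 0) =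
      (\<Sum>x\<in>X. if x \<in> K then real (card K) - 1 else 0)"
    by (rule sum.cong[OF refl])
  also have "\<dots> = real (card K) * (real (card K) - 1)"
    using assms by (simp add: sum.If_cases Int_absorb1)
  finally show ?thesis .
qed

lemma quadratic_deficit:
  fixes k m L :: real
  assumes "0 \<le> k" "k \<le> m" "1 \<le> m" "k \<le> L"
  shows "k * (k - 1) - (m - 1) * L \<le> 0"
    and "k * (k - 1) - (m - 1) * L = 0 \<Longrightarrow> (k = 0 \<or> k = m) \<and> (m = 1 \<or> L = k)"
proof -
  have split: "k * (k - 1) - (m - 1) * L = k * (k - m) - (m - 1) * (L - k)"
    by (simp add: algebra_simps)
  have "k * (k - m) \<le> 0" "0 \<le> (m - 1) * (L - k)"
    using assms by (simp_all add: mult_nonneg_nonpos)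
  then show "k * (k - 1) - (m - 1) * L \<le> 0"
    using split by linarith
  assume "k * (k - 1) - (m - 1) * L = 0"
  then have "k * (k - m) = 0" "(m - 1) * (L - k) = 0"
    using split \<open>k * (k - m) \<le> 0\<close> \<open>0 \<le> (m - 1) * (L - k)\<close> by linarith+
  then show "(k = 0 \<or> k = m) \<and> (m = 1 \<or> L = k)"
    by simp
qed

section \<open>Edges of convex hulls of finite sets\<close>

lemma edge_of_convex_hullI:
  fixes V :: "'a::euclidean_space set" and f :: "'a \<Rightarrow> real"
  assumes "finite V" "u \<in> V" "v \<in> V" "u \<noteq> v" "linear f"
    and le: "\<And>w. w \<in> V \<Longrightarrow> f w \<le> b"
    and eq: "\<And>w. w \<in> V \<Longrightarrow> f w = b \<longleftrightarrow> w = u \<or> w = v"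
  shows "is_edge_of (convex hull {u, v}) (convex hull V)"
proof -
  define a where "a = adjoint f 1"
  have f_inner: "f x = inner a x" for x
    using adjoint_works[OF assms(5), of x 1] by (simp add: a_def inner_commute)
  define F where "F = convex hull V \<inter> {x. inner a x = b}"
  have "convex hull V \<subseteq> {x. inner a x \<le> b}"
    using le f_inner by (intro hull_minimal) (auto simp: convex_halfspace_le)
  then have face: "F face_of convex hull V"
    unfolding F_def by (intro face_of_Int_supporting_hyperplane_le) auto
  have "F = convex hull {u, v}"
  proof
    obtain T where T: "T \<subseteq> V" "F = convex hull T"
      using face_of_convex_hull_subset[OF finite_imp_compact[OF assms(1)] face] by blast
    have "T \<subseteq> {u, v}"
    proof
      fix w assume "w \<in> T"
      then have "w \<in> V" "w \<in> F"
        using T hull_subset[of T convex] by auto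
      then show "w \<in> {u, v}"
        using eq[of w] f_inner by (simp add: F_def)
    qed
    then show "F \<subseteq> convex hull {u, v}"
      using T(2) by (simp add: hull_mono)
  next
    have "convex hull {u, v} \<subseteq> convex hull V"
      using assms(2,3) by (intro hull_mono) auto
    moreover have "convex hull {u, v} \<subseteq> {x. inner a x = b}"
      using eq[of u] eq[of v] assms(2,3) f_inner
      by (intro hull_minimal) (auto simp: convex_hyperplane)
    ultimately show "convex hull {u, v} \<subseteq> F"
      by (simp add: F_def)
  qed
  then show ?thesis
    using face assms(4) by (simp add: is_edge_of_def aff_dim_convex_hull)
qed

lemma exists_lexicographic_weight:
  fixes f g :: "'a \<Rightarrow> real"
  assumes "finite V" "\<And>w. w \<in> V \<Longrightarrow> f w \<le> c" "\<And>w. w \<in> V \<Longrightarrow> f w = c \<Longrightarrow> g w \<le> d"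
  obtains M where "\<And>w. w \<in> V \<Longrightarrow> M * f w + g w \<le> M * c + d"
    and "\<And>w. w \<in> V \<Longrightarrow> M * f w + g w = M * c + d \<longleftrightarrow> f w = c \<and> g w = d"
proof -
  define ratio where "ratio w = (g w - d) / (c - f w)" for w
  define M where "M = Max (insert 0 (ratio ` {w \<in> V. f w < c})) + 1"
  have strict: "M * f w + g w < M * c + d" if "w \<in> V" "f w < c" for w
  proof -
    have "ratio w \<le> M - 1"
      using that assms(1) by (simp add: M_def)
    then have "g w - d \<le> (M - 1) * (c - f w)"
      using that(2) by (simp add: ratio_def divide_le_eq mult.commute)
    then show ?thesis
      using that(2) by (simp add: algebra_simps)
  qed
  show ?thesis
  proof
    fix w assume w: "w \<in> V"
    show "M * f w + g w \<le> M * c + d"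
      using strict[OF w] assms(2,3)[OF w] by (cases "f w < c") auto
    show "M * f w + g w = M * c + d \<longleftrightarrow> f w = c \<and> g w = d"
      using strict[OF w] assms(2,3)[OF w] by (cases "f w < c") auto
  qed
qed

lemma agreement_sum_le:
  fixes u w :: "real ^ 'i"
  assumes "finite K" "\<And>S. S \<in> K \<Longrightarrow> u $ S \<in> {0, 1}" "\<And>S. S \<in> K \<Longrightarrow> w $ S \<in> {0, 1}"
  shows "(\<Sum>S\<in>K. (2 * u $ S - 1) * w $ S) \<le> (\<Sum>S\<in>K. (2 * u $ S - 1) * u $ S)"
    and "(\<Sum>S\<in>K. (2 * u $ S - 1) * w $ S) = (\<Sum>S\<in>K. (2 * u $ S - 1) * u $ S)
      \<longleftrightarrow> (\<forall>S\<in>K. w $ S = u $ S)"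
proof -
  have le: "(2 * u $ S - 1) * w $ S \<le> (2 * u $ S - 1) * u $ S" if "S \<in> K" for S
    using assms(2,3)[OF that] by auto
  then show "(\<Sum>S\<in>K. (2 * u $ S - 1) * w $ S) \<le> (\<Sum>S\<in>K. (2 * u $ S - 1) * u $ S)"
    by (rule sum_mono)
  have "(2 * u $ S - 1) * w $ S = (2 * u $ S - 1) * u $ S \<longleftrightarrow> w $ S = u $ S" if "S \<in> K" for S
    using assms(2,3)[OF that] by auto
  then show "(\<Sum>S\<in>K. (2 * u $ S - 1) * w $ S) = (\<Sum>S\<in>K. (2 * u $ S - 1) * u $ S)
      \<longleftrightarrow> (\<forall>S\<in>K. w $ S = u $ S)"
    by (simp add: sum_mono_eq_iff[OF assms(1) le])
qed

section \<open>Redirecting the edges between i and an independent set\<close>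

locale redirection =
  fixes G :: "('n::finite \<times> 'n) set" and i :: 'n and Sstar :: "'n set" and H :: "('n \<times> 'n) set"
  assumes i_notin_Sstar: "i \<notin> Sstar"
    and acyclic_G: "acyclic G"
    and Sstar_independent: "\<forall>a\<in>Sstar. \<forall>b\<in>Sstar. (a, b) \<notin> G"
    and H_def: "H = (G - {(i, j) | j. j \<in> Sstar}) \<union> {(j, i) | j. j \<in> Sstar}"
    and acyclic_H: "acyclic H"
begin

lemma H_iff: "(u, v) \<in> H \<longleftrightarrow> (u, v) \<in> G \<and> \<not> (u = i \<and> v \<in> Sstar) \<or> v = i \<and> u \<in> Sstar"
  using H_def by auto

definition P :: "'n set" where "P = pa G i"
definition X :: "'n set" where "X = Sstar - P"
definition C :: "'n set" where "C = {x \<in> X. (i, x) \<notin> G}"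
definition B :: "'n set" where "B = {x \<in> X. (i, x) \<in> G}"
definition Q :: "'n \<Rightarrow> 'n set" where "Q x = {p \<in> P. \<not> adjacent G x p}"
definition U :: "'n \<Rightarrow> 'n set" where "U b = pa G b - P - {i}"

definition common :: "'n set set" where
  "common = {S. char_imset G $ S = char_imset H $ S}"

definition agrees :: "('n \<times> 'n) set \<Rightarrow> bool" where
  "agrees E \<longleftrightarrow> acyclic E \<and> (\<forall>S\<in>common. char_imset E $ S = char_imset G $ S)"

definition into_i :: "('n \<times> 'n) set \<Rightarrow> 'n \<Rightarrow> bool" where
  "into_i E x \<longleftrightarrow> (x, i) \<in> E \<and> (\<forall>p\<in>Q x. (p, i) \<in> E)"

text \<open>H differs from G only between i and X: for x \<in> C the edge x \<rightarrow> i is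
  added, for x \<in> B the edge i \<rightarrow> x is reversed.\<close>

lemma P_iff: "p \<in> P \<longleftrightarrow> (p, i) \<in> G"
  by (simp add: P_def pa_def)

lemma X_iff: "x \<in> X \<longleftrightarrow> x \<in> Sstar \<and> (x, i) \<notin> G"
  by (simp add: X_def P_iff)

lemma X_eq: "X = B \<union> C" "B \<inter> C = {}"
  by (auto simp: B_def C_def)

lemma i_notin_P: "i \<notin> P"
  using acyclic_no_loop[OF acyclic_G] by (simp add: P_iff)

lemma X_Sstar: "x \<in> X \<Longrightarrow> x \<in> Sstar"
  by (simp add: X_iff)

lemma X_ne_i: "x \<in> X \<Longrightarrow> x \<noteq> i"
  using i_notin_Sstar by (auto simp: X_iff)

lemma X_notin_P: "x \<in> X \<Longrightarrow> x \<notin> P"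
  by (simp add: X_def)

lemma P_ne_i: "p \<in> P \<Longrightarrow> p \<noteq> i"
  using i_notin_P by blast

lemma Q_subset_P: "Q x \<subseteq> P"
  by (auto simp: Q_def)

lemma Q_ne: "x \<in> X \<Longrightarrow> p \<in> Q x \<Longrightarrow> p \<noteq> x \<and> p \<noteq> i"
  using Q_subset_P X_notin_P P_ne_i by blast

lemma U_iff: "r \<in> U b \<longleftrightarrow> (r, b) \<in> G \<and> r \<notin> P \<and> r \<noteq> i"
  by (simp add: U_def pa_def)

lemma U_ne: "r \<in> U b \<Longrightarrow> r \<noteq> b \<and> r \<noteq> i"
  using acyclic_no_loop[OF acyclic_G] by (auto simp: U_iff)

lemma B_X: "b \<in> B \<Longrightarrow> b \<in> X" and C_X: "c \<in> C \<Longrightarrow> c \<in> X"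
  by (simp_all add: B_def C_def)

lemma B_edge: "b \<in> B \<Longrightarrow> (i, b) \<in> G"
  by (simp add: B_def)

lemma C_not_adjacent: "c \<in> C \<Longrightarrow> \<not> adjacent G i c"
  by (auto simp: C_def X_iff adjacent_def)

lemma Sstar_not_adjacent: "x \<in> Sstar \<Longrightarrow> y \<in> Sstar \<Longrightarrow> \<not> adjacent G x y"
  using Sstar_independent by (auto simp: adjacent_def)

lemma adjacent_H_iff: "u \<noteq> i \<Longrightarrow> v \<noteq> i \<Longrightarrow> adjacent H u v \<longleftrightarrow> adjacent G u v"
  by (auto simp: adjacent_def H_iff)

lemma adjacent_H_i_iff: "z \<noteq> i \<Longrightarrow> adjacent H i z \<longleftrightarrow> adjacent G i z \<or> z \<in> Sstar"
  by (auto simp: adjacent_def H_iff)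

lemma agrees_G: "agrees G"
  using acyclic_G by (simp add: agrees_def)

lemma agrees_H: "agrees H"
  using acyclic_H by (simp add: agrees_def common_def)

lemma agrees_acyclic: "agrees E \<Longrightarrow> acyclic E"
  by (simp add: agrees_def)

lemma agrees_adjacent_iff:
  assumes "agrees E" "u \<noteq> v" "adjacent G u v \<longleftrightarrow> adjacent H u v"
  shows "adjacent E u v \<longleftrightarrow> adjacent G u v"
proof -
  have "{u, v} \<in> common"
    using assms(2,3) by (simp add: common_def char_imset_doubleton)
  then have "char_imset E $ {u, v} = char_imset G $ {u, v}"
    using assms(1) by (simp add: agrees_def)
  then show ?thesis
    using assms(2) by (simp add: char_imset_doubleton split: if_splits)
qed

lemma agrees_not_adjacent_Sstar:
  "agrees E \<Longrightarrow> x \<in> Sstar \<Longrightarrow> y \<in> Sstar \<Longrightarrow> x \<noteq> y \<Longrightarrow> \<not> adjacent E x y"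
  using agrees_adjacent_iff adjacent_H_iff Sstar_not_adjacent i_notin_Sstar by metis

lemma agrees_not_adjacent_Q:
  assumes "agrees E" "x \<in> X" "p \<in> Q x"
  shows "\<not> adjacent E x p"
proof -
  have "\<not> adjacent G x p" "x \<noteq> i" "p \<noteq> i" "x \<noteq> p"
    using assms(2,3) Q_ne X_ne_i by (auto simp: Q_def)
  then show ?thesis
    using agrees_adjacent_iff[OF assms(1)] adjacent_H_iff by metis
qed

lemma agrees_not_adjacent_U:
  assumes "agrees E" "b \<in> B" "r \<in> U b"
  shows "\<not> adjacent E i r"
proof -
  have r: "(r, b) \<in> G" "r \<notin> P" "r \<noteq> i"
    using assms(3) by (auto simp: U_iff)
  have b: "b \<in> Sstar" "b \<noteq> i"
    using assms(2) B_X X_Sstar X_ne_i by auto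
  have "r \<notin> Sstar"
    using Sstar_independent r(1) b(1) by blast
  moreover have "(i, r) \<notin> G"
  proof
    assume "(i, r) \<in> G"
    then have "(i, r) \<in> H" "(r, b) \<in> H" "(b, i) \<in> H"
      using \<open>r \<notin> Sstar\<close> r b by (auto simp: H_iff)
    then show False
      using acyclic_no_3cycle[OF acyclic_H] by blast
  qed
  ultimately have "\<not> adjacent G i r" "\<not> adjacent H i r"
    using r(2,3) adjacent_H_i_iff[of r] by (auto simp: adjacent_def P_iff)
  then show ?thesis
    using agrees_adjacent_iff[OF assms(1) r(3)[symmetric]] by simp
qed

lemma agrees_adjacent_P: "agrees E \<Longrightarrow> p \<in> P \<Longrightarrow> adjacent E i p"
  using agrees_adjacent_iff[of E i p] adjacent_H_i_iff[of p] P_ne_i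
  by (auto simp: adjacent_def P_iff)

lemma agrees_adjacent_C_P:
  assumes "agrees E" "c \<in> C" "p \<in> P" "adjacent G c p"
  shows "adjacent E c p"
proof -
  have "c \<noteq> i" "p \<noteq> i" "c \<noteq> p"
    using assms(2,3) C_X X_ne_i P_ne_i X_notin_P by auto
  then show ?thesis
    using agrees_adjacent_iff[OF assms(1)] adjacent_H_iff assms(4) by metis
qed

definition W :: "'n \<Rightarrow> 'n \<Rightarrow> 'n set" where "W x y = {i, x, y} \<union> Q x \<union> Q y"
definition UF :: "'n \<Rightarrow> 'n set" where "UF b = {i, b} \<union> U b"
definition QF :: "'n \<Rightarrow> 'n set" where "QF x = {i, x} \<union> Q x"

lemma char_imset_W:
  assumes E: "agrees E" and xy: "x \<in> X" "y \<in> X" "x \<noteq> y"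
  shows "char_imset E $ W x y = (if into_i E x \<and> into_i E y then 1 else 0)"
proof -
  have nxy: "(x, y) \<notin> E" "(y, x) \<notin> E"
    using agrees_not_adjacent_Sstar[OF E X_Sstar[OF xy(1)] X_Sstar[OF xy(2)] xy(3)]
    by (auto simp: adjacent_def)
  have nQ: "(x, p) \<notin> E" if "x \<in> X" "p \<in> Q x" for x p
    using agrees_not_adjacent_Q[OF E that] by (simp add: adjacent_def)
  have "in_family E (W x y) \<longleftrightarrow> (\<forall>z\<in>W x y. z \<noteq> i \<longrightarrow> (z, i) \<in> E)"
  proof (rule in_family_iff_parents_of)
    fix k assume k: "k \<in> W x y" "k \<noteq> i"
    then consider "k = x" | "k = y" | "k \<in> Q x" | "k \<in> Q y"
      by (auto simp: W_def)
    then show "\<exists>z\<in>W x y. z \<noteq> k \<and> (z, k) \<notin> E"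
    proof cases
      case 1 then show ?thesis using nxy xy(3) by (intro bexI[of _ y]) (auto simp: W_def)
    next
      case 2 then show ?thesis using nxy xy(3) by (intro bexI[of _ x]) (auto simp: W_def)
    next
      case 3 then show ?thesis using nQ[OF xy(1)] Q_ne[OF xy(1)] by (intro bexI[of _ x]) (auto simp: W_def)
    next
      case 4 then show ?thesis using nQ[OF xy(2)] Q_ne[OF xy(2)] by (intro bexI[of _ y]) (auto simp: W_def)
    qed
  qed (simp add: W_def)
  moreover have "(\<forall>z\<in>W x y. z \<noteq> i \<longrightarrow> (z, i) \<in> E) \<longleftrightarrow> into_i E x \<and> into_i E y"
    using X_ne_i[OF xy(1)] X_ne_i[OF xy(2)] Q_ne[OF xy(1)] Q_ne[OF xy(2)]
    by (auto simp: W_def into_i_def)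
  ultimately show ?thesis
    using char_imset_nth_eq_in_family[of i "W x y" x] X_ne_i[OF xy(1)] by (simp add: W_def)
qed

lemma char_imset_Sstar_triple:
  assumes E: "agrees E" and xy: "x \<in> Sstar" "y \<in> Sstar" "x \<noteq> y"
  shows "char_imset E $ {i, x, y} = (if (x, i) \<in> E \<and> (y, i) \<in> E then 1 else 0)"
proof -
  have "(x, y) \<notin> E" "(y, x) \<notin> E" "x \<noteq> i" "y \<noteq> i"
    using agrees_not_adjacent_Sstar[OF E xy] xy(1,2) i_notin_Sstar by (auto simp: adjacent_def)
  then have "in_family E {i, x, y} \<longleftrightarrow> (\<forall>z\<in>{i, x, y}. z \<noteq> i \<longrightarrow> (z, i) \<in> E)"
    using xy(3) by (intro in_family_iff_parents_of) auto
  then show ?thesis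
    using char_imset_nth_eq_in_family[of i "{i, x, y}" x E] \<open>x \<noteq> i\<close> \<open>y \<noteq> i\<close> by auto
qed

lemma char_imset_Q_triple:
  assumes E: "agrees E" and x: "x \<in> X" and p: "p \<in> Q x"
  shows "char_imset E $ {i, x, p} = (if (x, i) \<in> E \<and> (p, i) \<in> E then 1 else 0)"
proof -
  have "(x, p) \<notin> E" "(p, x) \<notin> E" "x \<noteq> i"
    using agrees_not_adjacent_Q[OF E x p] X_ne_i[OF x] by (auto simp: adjacent_def)
  then have "in_family E {i, x, p} \<longleftrightarrow> (\<forall>z\<in>{i, x, p}. z \<noteq> i \<longrightarrow> (z, i) \<in> E)"
    using Q_ne[OF x p] by (intro in_family_iff_parents_of) auto
  then show ?thesis
    using char_imset_nth_eq_in_family[of i "{i, x, p}" x E] \<open>x \<noteq> i\<close> Q_ne[OF x p] by auto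
qed

lemma char_imset_UF:
  assumes E: "agrees E" and b: "b \<in> B" and U: "U b \<noteq> {}"
  shows "char_imset E $ UF b = (if (i, b) \<in> E \<and> (\<forall>r\<in>U b. (r, b) \<in> E) then 1 else 0)"
proof -
  have bi: "b \<noteq> i"
    using X_ne_i[OF B_X[OF b]] .
  obtain r0 where r0: "r0 \<in> U b"
    using U by blast
  have nir: "(i, r) \<notin> E \<and> (r, i) \<notin> E" if "r \<in> U b" for r
    using agrees_not_adjacent_U[OF E b that] by (simp add: adjacent_def)
  have "in_family E (UF b) \<longleftrightarrow> (\<forall>z\<in>UF b. z \<noteq> b \<longrightarrow> (z, b) \<in> E)"
  proof (rule in_family_iff_parents_of)
    fix k assume k: "k \<in> UF b" "k \<noteq> b"
    then consider "k = i" | "k \<in> U b"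
      by (auto simp: UF_def)
    then show "\<exists>z\<in>UF b. z \<noteq> k \<and> (z, k) \<notin> E"
    proof cases
      case 1 then show ?thesis using nir[OF r0] U_ne[OF r0] r0 by (intro bexI[of _ r0]) (auto simp: UF_def)
    next
      case 2 then show ?thesis using nir U_ne by (intro bexI[of _ i]) (auto simp: UF_def)
    qed
  qed (simp add: UF_def)
  moreover have "(\<forall>z\<in>UF b. z \<noteq> b \<longrightarrow> (z, b) \<in> E) \<longleftrightarrow> (i, b) \<in> E \<and> (\<forall>r\<in>U b. (r, b) \<in> E)"
    using bi U_ne by (auto simp: UF_def)
  ultimately show ?thesis
    using char_imset_nth_eq_in_family[of i "UF b" b E] bi by (simp add: UF_def)
qed

lemma char_imset_U_triple:
  assumes E: "agrees E" and b: "b \<in> B" and r: "r \<in> U b"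
  shows "char_imset E $ {i, b, r} = (if (i, b) \<in> E \<and> (r, b) \<in> E then 1 else 0)"
proof -
  have "(i, r) \<notin> E" "(r, i) \<notin> E" "b \<noteq> i"
    using agrees_not_adjacent_U[OF E b r] X_ne_i[OF B_X[OF b]] by (auto simp: adjacent_def)
  then have "in_family E {i, b, r} \<longleftrightarrow> (\<forall>z\<in>{i, b, r}. z \<noteq> b \<longrightarrow> (z, b) \<in> E)"
    using U_ne[OF r] by (intro in_family_iff_parents_of) auto
  then show ?thesis
    using char_imset_nth_eq_in_family[of i "{i, b, r}" b E] \<open>b \<noteq> i\<close> U_ne[OF r] by auto
qed

lemma char_imset_QF:
  assumes E: "agrees E" and x: "x \<in> X" and Q: "Q x \<noteq> {}"
  shows "char_imset E $ QF x = (if into_i E x then 1 else 0)"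
proof -
  have xi: "x \<noteq> i"
    using X_ne_i[OF x] .
  obtain p0 where p0: "p0 \<in> Q x"
    using Q by blast
  have nxp: "(x, p) \<notin> E \<and> (p, x) \<notin> E" if "p \<in> Q x" for p
    using agrees_not_adjacent_Q[OF E x that] by (simp add: adjacent_def)
  have "in_family E (QF x) \<longleftrightarrow> (\<forall>z\<in>QF x. z \<noteq> i \<longrightarrow> (z, i) \<in> E)"
  proof (rule in_family_iff_parents_of)
    fix k assume k: "k \<in> QF x" "k \<noteq> i"
    then consider "k = x" | "k \<in> Q x"
      by (auto simp: QF_def)
    then show "\<exists>z\<in>QF x. z \<noteq> k \<and> (z, k) \<notin> E"
    proof cases
      case 1 then show ?thesis using nxp[OF p0] Q_ne[OF x p0] p0 by (intro bexI[of _ p0]) (auto simp: QF_def)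
    next
      case 2 then show ?thesis using nxp Q_ne[OF x] by (intro bexI[of _ x]) (auto simp: QF_def)
    qed
  qed (simp add: QF_def)
  moreover have "(\<forall>z\<in>QF x. z \<noteq> i \<longrightarrow> (z, i) \<in> E) \<longleftrightarrow> into_i E x"
    using xi Q_ne[OF x] by (auto simp: QF_def into_i_def)
  ultimately show ?thesis
    using char_imset_nth_eq_in_family[of i "QF x" x E] xi by (simp add: QF_def)
qed

lemma char_imset_C_P_triple:
  assumes E: "agrees E" and c: "c \<in> C" and p: "p \<in> P" "adjacent G c p" and ic: "adjacent E i c"
  shows "char_imset E $ {i, c, p} = 1"
proof -
  have "i \<noteq> c"
    using X_ne_i[OF C_X[OF c]] by simp
  moreover have "in_family E {i, c, p}"
    using agrees_acyclic[OF E] ic agrees_adjacent_P[OF E p(1)] agrees_adjacent_C_P[OF E c p]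
    by (rule in_family_triangle)
  ultimately show ?thesis
    using char_imset_nth_eq_in_family[of i "{i, c, p}" c E] by simp
qed

lemma X_not_parent_i_G: "x \<in> X \<Longrightarrow> (x, i) \<notin> G"
  by (simp add: X_iff)

lemma Sstar_parent_i_H: "x \<in> Sstar \<Longrightarrow> (x, i) \<in> H"
  by (simp add: H_iff)

lemma P_parent_i_H: "p \<in> P \<Longrightarrow> (p, i) \<in> H"
  using P_ne_i by (simp add: H_iff P_iff)

lemma i_not_parent_Sstar_H: "x \<in> Sstar \<Longrightarrow> (i, x) \<notin> H"
  using i_notin_Sstar by (auto simp: H_iff)

lemma not_into_i_G: "x \<in> X \<Longrightarrow> \<not> into_i G x"
  by (simp add: into_i_def X_iff)

lemma Q_parent_i_H: "p \<in> Q x \<Longrightarrow> (p, i) \<in> H"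
  using Q_subset_P P_parent_i_H by blast

lemma into_i_H: "x \<in> X \<Longrightarrow> into_i H x"
  by (simp add: into_i_def X_Sstar Sstar_parent_i_H Q_parent_i_H)

lemma char_imset_G_H_C_pair:
  assumes "c \<in> C"
  shows "char_imset G $ {i, c} = 0" "char_imset H $ {i, c} = 1"
proof -
  have "i \<noteq> c" "c \<in> Sstar"
    using assms C_X X_ne_i X_Sstar by force+
  then show "char_imset G $ {i, c} = 0" "char_imset H $ {i, c} = 1"
    using C_not_adjacent[OF assms] adjacent_H_i_iff[of c] by (simp_all add: char_imset_doubleton)
qed

lemma char_imset_G_H_X_triple:
  assumes "x \<in> X" "y \<in> X" "x \<noteq> y"
  shows "char_imset G $ {i, x, y} = 0" "char_imset H $ {i, x, y} = 1"
  using assms char_imset_Sstar_triple[OF agrees_G] char_imset_Sstar_triple[OF agrees_H]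
  by (simp_all add: X_Sstar X_not_parent_i_G Sstar_parent_i_H)

lemma char_imset_G_H_Q_triple:
  assumes "x \<in> X" "p \<in> Q x"
  shows "char_imset G $ {i, x, p} = 0" "char_imset H $ {i, x, p} = 1"
  using assms char_imset_Q_triple[OF agrees_G] char_imset_Q_triple[OF agrees_H]
  by (simp_all add: X_not_parent_i_G X_Sstar Sstar_parent_i_H Q_parent_i_H)

lemma char_imset_G_H_U_triple:
  assumes "b \<in> B" "r \<in> U b"
  shows "char_imset G $ {i, b, r} = 1" "char_imset H $ {i, b, r} = 0"
  using assms char_imset_U_triple[OF agrees_G] char_imset_U_triple[OF agrees_H]
  by (auto simp: B_edge U_iff i_not_parent_Sstar_H B_X X_Sstar)

lemma char_imset_G_C_P_triple:
  assumes c: "c \<in> C" and p: "p \<in> P"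
  shows "char_imset G $ {i, c, p} = 0"
proof -
  have ne: "i \<noteq> c" "i \<noteq> p" "c \<noteq> p"
    using C_X[OF c] p X_ne_i P_ne_i X_notin_P by force+
  have "(c, i) \<notin> G" "(i, c) \<notin> G" "(i, p) \<notin> G"
    using C_not_adjacent[OF c] acyclic_no_2cycle[OF acyclic_G] p by (auto simp: adjacent_def P_iff)
  then have "\<not> in_family G {i, c, p}"
    using ne unfolding in_family_iff by auto
  then show ?thesis
    using char_imset_nth_eq_in_family[of i "{i, c, p}" c G] ne by simp
qed

lemma char_imset_H_C_P_triple:
  "c \<in> C \<Longrightarrow> p \<in> P \<Longrightarrow> adjacent G c p \<Longrightarrow> char_imset H $ {i, c, p} = 1"
  using char_imset_C_P_triple[OF agrees_H] adjacent_H_i_iff C_X X_ne_i X_Sstar by blast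

lemma in_family_H_only_sink:
  assumes "in_family H S" "\<not> in_family G S"
  shows "i \<in> S" "\<And>z. z \<in> S \<Longrightarrow> z \<noteq> i \<Longrightarrow> (z, i) \<in> G \<or> z \<in> Sstar"
proof -
  obtain k where k: "k \<in> S" "\<forall>z\<in>S. z \<noteq> k \<longrightarrow> (z, k) \<in> H"
    using assms(1) unfolding in_family_iff by blast
  have "k = i"
  proof (rule ccontr)
    assume "k \<noteq> i"
    then have "\<forall>z\<in>S. z \<noteq> k \<longrightarrow> (z, k) \<in> G"
      using k(2) by (auto simp: H_iff)
    then show False
      using assms(2) k(1) unfolding in_family_iff by blast
  qed
  then show "i \<in> S" "\<And>z. z \<in> S \<Longrightarrow> z \<noteq> i \<Longrightarrow> (z, i) \<in> G \<or> z \<in> Sstar"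
    using k by (auto simp: H_iff)
qed

lemma in_family_H_only_triple_cases:
  assumes nG: "\<not> in_family G {i, a, b}" and "a \<noteq> b" "a \<in> X" "b \<in> X \<or> b \<in> P"
  obtains (X_triple) "b \<in> X"
    | (Q_triple) "b \<in> Q a"
    | (C_P_triple) "a \<in> C" "b \<in> P" "adjacent G a b"
proof (cases "b \<in> X")
  case False
  then have bP: "b \<in> P"
    using assms(4) by blast
  show ?thesis
  proof (cases "adjacent G a b")
    case False
    then show ?thesis
      using bP Q_triple by (simp add: Q_def)
  next
    case adj: True
    have "a \<in> C"
    proof (rule ccontr)
      assume "a \<notin> C"
      then have ia: "(i, a) \<in> G"
        using assms(3) by (simp add: C_def)
      have bi: "(b, i) \<in> G"
        using bP by (simp add: P_iff)
      have "(a, b) \<notin> G"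
        using acyclic_no_3cycle[OF acyclic_G ia] bi by blast
      then have "(b, a) \<in> G"
        using adj by (simp add: adjacent_def)
      then have "in_family G {i, a, b}"
        using ia by (intro in_familyI[of a]) auto
      then show False
        using nG by blast
    qed
    then show ?thesis
      using bP adj C_P_triple by blast
  qed
qed (rule X_triple)

lemma in_family_H_only_cases:
  assumes "card S = 2 \<or> card S = 3" "in_family H S" "\<not> in_family G S"
  obtains (C_pair) c where "c \<in> C" "S = {i, c}"
    | (X_triple) x y where "x \<in> X" "y \<in> X" "x \<noteq> y" "S = {i, x, y}"
    | (Q_triple) x p where "x \<in> X" "p \<in> Q x" "S = {i, x, p}"
    | (C_P_triple) c p where "c \<in> C" "p \<in> P" "adjacent G c p" "S = {i, c, p}"
proof -
  note sink = in_family_H_only_sink[OF assms(2,3)]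
  have not_all_P: "\<exists>z\<in>S. z \<noteq> i \<and> (z, i) \<notin> G"
    using assms(3) sink(1) unfolding in_family_iff by blast
  have X_or_P: "z \<in> X \<or> z \<in> P" if "z \<in> S" "z \<noteq> i" for z
    using sink(2)[OF that] by (auto simp: X_iff P_iff)
  from assms(1) show ?thesis
  proof
    assume "card S = 2"
    then obtain c where S: "S = {i, c}" "c \<noteq> i"
      using sink(1) by (rule card_2_containing)
    then have "c \<in> X"
      using not_all_P sink(2)[of c] by (auto simp: X_iff)
    moreover have "(i, c) \<notin> G"
      using assms(3) S by (auto intro: in_familyI[of c])
    ultimately show ?thesis
      using C_pair S(1) by (simp add: C_def)
  next
    assume "card S = 3"
    then obtain u w where S: "S = {i, u, w}" "u \<noteq> i" "w \<noteq> i" "u \<noteq> w"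
      using sink(1) by (rule card_3_containing)
    obtain a b where ab: "S = {i, a, b}" "a \<noteq> i" "b \<noteq> i" "a \<noteq> b" "a \<in> X"
    proof (cases "u \<in> X")
      case True
      then show ?thesis using that[of u w] S by blast
    next
      case False
      then have "w \<in> X"
        using not_all_P X_or_P S by (auto simp: P_iff)
      then show ?thesis using that[of w u] S by (auto simp: insert_commute)
    qed
    have nG: "\<not> in_family G {i, a, b}" and b: "b \<in> X \<or> b \<in> P"
      using assms(3) X_or_P ab by auto
    from nG ab(4,5) b show ?thesis
    proof (cases rule: in_family_H_only_triple_cases)
      case X_triple
      then show ?thesis using that(2)[of a b] ab by blast
    next
      case Q_triple
      then show ?thesis using that(3)[of a b] ab by blast
    next
      case C_P_triple
      then show ?thesis using that(4)[of a b] ab by blast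
    qed
  qed
qed

lemma in_family_G_only_cases:
  assumes "card S = 2 \<or> card S = 3" "in_family G S" "\<not> in_family H S"
  obtains b r where "b \<in> B" "r \<in> U b" "S = {i, b, r}"
proof -
  obtain k where k: "k \<in> S" "\<forall>z\<in>S. z \<noteq> k \<longrightarrow> (z, k) \<in> G"
    using assms(2) unfolding in_family_iff by blast
  obtain z where z: "z \<in> S" "z \<noteq> k" "(z, k) \<notin> H"
    using assms(3) k(1) unfolding in_family_iff by blast
  then have "z = i" "k \<in> Sstar" "(i, k) \<in> G"
    using k(2) by (auto simp: H_iff)
  then have kB: "k \<in> B" "k \<noteq> i"
    using acyclic_no_2cycle[OF acyclic_G] i_notin_Sstar by (auto simp: B_def X_iff)
  have "(k, i) \<in> H"
    using \<open>k \<in> Sstar\<close> by (rule Sstar_parent_i_H)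
  have iS: "i \<in> S"
    using z(1) \<open>z = i\<close> by simp
  from assms(1) show ?thesis
  proof
    assume "card S = 2"
    then obtain u where "S = {i, u}" "u \<noteq> i"
      using iS by (rule card_2_containing)
    then have "in_family H S"
      using k(1) kB(2) \<open>(k, i) \<in> H\<close> by (intro in_familyI[of i]) auto
    then show ?thesis using assms(3) by blast
  next
    assume "card S = 3"
    then obtain u w where S: "S = {i, u, w}" "u \<noteq> i" "w \<noteq> i" "u \<noteq> w"
      using iS by (rule card_3_containing)
    obtain r where r: "S = {i, k, r}" "r \<noteq> i" "r \<noteq> k"
    proof (cases "k = u")
      case True
      then show ?thesis using that[of w] S by blast
    next
      case False
      then have "k = w" using k(1) kB(2) S(1) by blast
      then show ?thesis using that[of u] S by (simp add: insert_commute)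
    qed
    have "r \<notin> P"
    proof
      assume "r \<in> P"
      then have "in_family H S"
        using r \<open>(k, i) \<in> H\<close> P_parent_i_H by (intro in_familyI[of i]) auto
      then show False using assms(3) by blast
    qed
    then have "r \<in> U k"
      using k(2) r by (auto simp: U_iff)
    then show ?thesis
      using that kB(1) r(1) by blast
  qed
qed

lemma differing_set_cases:
  assumes "card S = 2 \<or> card S = 3" "S \<notin> common"
  obtains (C_pair) c where "c \<in> C" "S = {i, c}"
    | (X_triple) x y where "x \<in> X" "y \<in> X" "x \<noteq> y" "S = {i, x, y}"
    | (Q_triple) x p where "x \<in> X" "p \<in> Q x" "S = {i, x, p}"
    | (C_P_triple) c p where "c \<in> C" "p \<in> P" "adjacent G c p" "S = {i, c, p}"
    | (U_triple) b r where "b \<in> B" "r \<in> U b" "S = {i, b, r}"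
proof -
  have "2 \<le> card S"
    using assms(1) by auto
  then have "in_family G S \<noteq> in_family H S"
    using assms(2) by (auto simp: common_def char_imset_nth split: if_splits)
  then consider "in_family H S" "\<not> in_family G S" | "in_family G S" "\<not> in_family H S"
    by blast
  then show ?thesis
  proof cases
    case 1
    with assms(1) show ?thesis
    proof (cases rule: in_family_H_only_cases)
      case C_pair then show ?thesis using that(1) by simp
    next
      case X_triple then show ?thesis using that(2) by simp
    next
      case Q_triple then show ?thesis using that(3) by simp
    next
      case C_P_triple then show ?thesis using that(4) by simp
    qed
  next
    case 2
    with assms(1) show ?thesis
      by (cases rule: in_family_G_only_cases) (rule that(5))
  qed
qed

definition no_covered_B :: bool where
  "no_covered_B \<longleftrightarrow> (\<forall>b\<in>B. \<not> covered G i b)"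

lemma no_covered_B_nonempty:
  assumes "no_covered_B" "b \<in> B"
  shows "U b \<noteq> {} \<or> Q b \<noteq> {}"
proof (rule ccontr)
  assume "\<not> (U b \<noteq> {} \<or> Q b \<noteq> {})"
  then have UQ: "U b = {}" "Q b = {}" by auto
  have ib: "(i, b) \<in> G"
    using B_edge[OF assms(2)] .
  have "p \<in> pa G b" if "p \<in> P" for p
  proof -
    have "adjacent G b p"
      using UQ(2) that by (auto simp: Q_def)
    moreover have "(b, p) \<notin> G"
      using acyclic_no_3cycle[OF acyclic_G ib] that by (auto simp: P_iff)
    ultimately show ?thesis
      by (simp add: adjacent_def pa_def)
  qed
  moreover have "pa G b \<subseteq> P \<union> {i}"
    using UQ(1) by (auto simp: U_def)
  ultimately have "covered G i b"
    using ib by (auto simp: covered_def P_def pa_def)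
  then show False
    using assms by (simp add: no_covered_B_def)
qed

text \<open>orient x v is 1 when v looks like c_H at the coordinates through i and x,
  and 0 when it looks like c_G. It is affine; splitting off the constant orient_offset
  keeps phi below linear.\<close>

definition orient_lin :: "'n \<Rightarrow> real ^ ('n set) \<Rightarrow> real" where
  "orient_lin x v = (if x \<in> C then v $ {i, x} else if U x \<noteq> {} then - v $ UF x else v $ QF x)"

definition orient_offset :: "'n \<Rightarrow> real" where
  "orient_offset x = (if x \<notin> C \<and> U x \<noteq> {} then 1 else 0)"

definition orient :: "'n \<Rightarrow> real ^ ('n set) \<Rightarrow> real" where
  "orient x v = orient_lin x v + orient_offset x"

definition consistency :: "'n \<Rightarrow> real ^ ('n set) \<Rightarrow> real" where
  "consistency x v =
    (if x \<in> C then (\<Sum>p\<in>P. if adjacent G x p then v $ {i, x} - v $ {i, x, p} else v $ {i, x, p} - v $ {i, x})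
     else if U x \<noteq> {} then (\<Sum>r\<in>U x. v $ UF x - v $ {i, x, r}) + (\<Sum>p\<in>Q x. v $ {i, x, p} + v $ UF x)
     else (\<Sum>p\<in>Q x. v $ QF x - v $ {i, x, p}))"

definition consistency_bound :: "'n \<Rightarrow> real" where
  "consistency_bound x = (if x \<notin> C \<and> U x \<noteq> {} then real (card (Q x)) else 0)"

definition consistent :: "('n \<times> 'n) set \<Rightarrow> 'n \<Rightarrow> bool" where
  "consistent E x \<longleftrightarrow>
    (x \<in> C \<longrightarrow> char_imset E $ {i, x} = orient x (char_imset E) \<and>
      (\<forall>p\<in>P. char_imset E $ {i, x, p} = orient x (char_imset E))) \<and>
    (\<forall>p\<in>Q x. char_imset E $ {i, x, p} = orient x (char_imset E)) \<and>
    (x \<notin> C \<longrightarrow> (\<forall>r\<in>U x. char_imset E $ {i, x, r} = 1 - orient x (char_imset E)))"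

definition vertex_bounds :: "('n \<times> 'n) set \<Rightarrow> 'n \<Rightarrow> bool" where
  "vertex_bounds E x \<longleftrightarrow>
    orient x (char_imset E) \<in> {0, 1} \<and> (into_i E x \<longrightarrow> orient x (char_imset E) = 1) \<and>
    consistency x (char_imset E) \<le> consistency_bound x \<and>
    (consistency x (char_imset E) = consistency_bound x \<longrightarrow> consistent E x)"

lemma vertex_bounds_C:
  assumes E: "agrees E" and x: "x \<in> C"
  shows "vertex_bounds E x"
proof -
  let ?c = "\<lambda>S. char_imset E $ S"
  have xX: "x \<in> X" using C_X[OF x] .
  have o: "orient x (char_imset E) = ?c {i, x}"
    using x by (simp add: orient_def orient_lin_def orient_offset_def)
  have a: "?c {i, x} = (if adjacent E i x then 1 else 0)"
    using X_ne_i[OF xX] by (simp add: char_imset_doubleton)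
  define t where "t p = (if adjacent G x p then ?c {i, x} - ?c {i, x, p} else ?c {i, x, p} - ?c {i, x})" for p
  have cons: "consistency x (char_imset E) = (\<Sum>p\<in>P. t p)" "consistency_bound x = 0"
    using x by (simp_all add: consistency_def consistency_bound_def t_def)
  have t_le: "t p \<le> 0" if p: "p \<in> P" for p
  proof (cases "adjacent G x p")
    case True
    then have "?c {i, x} \<le> ?c {i, x, p}"
      using a char_imset_C_P_triple[OF E x p] char_imset_nth_01[of E "{i, x, p}"] by auto
    then show ?thesis using True by (simp add: t_def)
  next
    case False
    then have "p \<in> Q x" using p by (simp add: Q_def)
    then have "?c {i, x, p} \<le> ?c {i, x}"
      using char_imset_Q_triple[OF E xX] a by (auto simp: adjacent_def)
    then show ?thesis using False by (simp add: t_def)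
  qed
  have "consistent E x" if "consistency x (char_imset E) = consistency_bound x"
  proof -
    have "\<forall>p\<in>P. t p = 0"
      using that t_le cons sum_mono_eq_iff[of P t "\<lambda>_. 0"] by simp
    then have "\<forall>p\<in>P. ?c {i, x, p} = ?c {i, x}"
      by (auto simp: t_def split: if_splits)
    then show ?thesis
      using o x Q_subset_P X_eq(2) by (auto simp: consistent_def)
  qed
  moreover have "into_i E x \<Longrightarrow> orient x (char_imset E) = 1"
    using o a by (simp add: into_i_def adjacent_def)
  ultimately show ?thesis
    using o a cons t_le by (simp add: vertex_bounds_def sum_nonpos)
qed

lemma vertex_bounds_B_U:
  assumes E: "agrees E" and x: "x \<in> B" and U: "U x \<noteq> {}"
  shows "vertex_bounds E x"
proof -
  let ?c = "\<lambda>S. char_imset E $ S"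
  have xX: "x \<in> X" and xC: "x \<notin> C"
    using x X_eq by (auto simp: B_X)
  define s where "s = ?c (UF x)"
  have s: "s = (if (i, x) \<in> E \<and> (\<forall>r\<in>U x. (r, x) \<in> E) then 1 else 0)"
    using char_imset_UF[OF E x U] by (simp add: s_def)
  have o: "orient x (char_imset E) = 1 - s"
    using xC U by (simp add: orient_def orient_lin_def orient_offset_def s_def)
  define f where "f r = s - ?c {i, x, r}" for r
  define g where "g p = ?c {i, x, p} + s" for p
  have cons: "consistency x (char_imset E) = (\<Sum>r\<in>U x. f r) + (\<Sum>p\<in>Q x. g p)"
      "consistency_bound x = (\<Sum>p\<in>Q x. 1)"
    using xC U by (simp_all add: consistency_def consistency_bound_def f_def g_def s_def)
  have f_le: "f r \<le> 0" if "r \<in> U x" for r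
    using char_imset_U_triple[OF E x that] s that by (auto simp: f_def)
  have no_2cycle: "\<not> ((x, i) \<in> E \<and> (i, x) \<in> E)"
    using acyclic_no_2cycle[OF agrees_acyclic[OF E]] by blast
  have g_le: "g p \<le> 1" if "p \<in> Q x" for p
    using char_imset_Q_triple[OF E xX that] s no_2cycle by (auto simp: g_def)
  have sums: "(\<Sum>r\<in>U x. f r) \<le> 0" "(\<Sum>p\<in>Q x. g p) \<le> (\<Sum>p\<in>Q x. 1)"
    using f_le g_le by (simp add: sum_nonpos, intro sum_mono)
  have "consistent E x" if "consistency x (char_imset E) = consistency_bound x"
  proof -
    have "(\<Sum>r\<in>U x. f r) = (\<Sum>r\<in>U x. 0)" "(\<Sum>p\<in>Q x. g p) = (\<Sum>p\<in>Q x. 1)"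
      using that cons sums by simp_all
    then have "\<forall>r\<in>U x. f r = 0" "\<forall>p\<in>Q x. g p = 1"
      using sum_mono_eq_iff[of "U x" f "\<lambda>_. 0"] sum_mono_eq_iff[of "Q x" g "\<lambda>_. 1"] f_le g_le
      by auto
    then show ?thesis
      using o xC by (auto simp: consistent_def f_def g_def algebra_simps)
  qed
  moreover have "into_i E x \<Longrightarrow> orient x (char_imset E) = 1"
    using o s no_2cycle by (auto simp: into_i_def)
  ultimately show ?thesis
    using o s cons sums by (simp add: vertex_bounds_def)
qed

lemma vertex_bounds_B_Q:
  assumes E: "agrees E" and x: "x \<in> B" and U: "U x = {}" and Q: "Q x \<noteq> {}"
  shows "vertex_bounds E x"
proof -
  let ?c = "\<lambda>S. char_imset E $ S"
  have xX: "x \<in> X" and xC: "x \<notin> C"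
    using x X_eq by (auto simp: B_X)
  have o: "orient x (char_imset E) = (if into_i E x then 1 else 0)"
    using xC U char_imset_QF[OF E xX Q] by (simp add: orient_def orient_lin_def orient_offset_def)
  define f where "f p = ?c (QF x) - ?c {i, x, p}" for p
  have cons: "consistency x (char_imset E) = (\<Sum>p\<in>Q x. f p)" "consistency_bound x = 0"
    using xC U by (simp_all add: consistency_def consistency_bound_def f_def)
  have f_le: "f p \<le> 0" if "p \<in> Q x" for p
    using char_imset_QF[OF E xX Q] char_imset_Q_triple[OF E xX that] that
    by (auto simp: f_def into_i_def)
  have "consistent E x" if "consistency x (char_imset E) = consistency_bound x"
  proof -
    have "\<forall>p\<in>Q x. f p = 0"
      using that cons f_le sum_mono_eq_iff[of "Q x" f "\<lambda>_. 0"] by simp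
    then show ?thesis
      using o xC U char_imset_QF[OF E xX Q] by (auto simp: consistent_def f_def)
  qed
  then show ?thesis
    using o cons f_le by (simp add: vertex_bounds_def sum_nonpos)
qed

lemma vertex_bounds:
  assumes "agrees E" "x \<in> X" "no_covered_B"
  shows "vertex_bounds E x"
proof -
  consider "x \<in> C" | "x \<in> B" "U x \<noteq> {}" | "x \<in> B" "U x = {}" "Q x \<noteq> {}"
    using assms(2,3) X_eq(1) no_covered_B_nonempty by blast
  then show ?thesis
    using assms(1) vertex_bounds_C vertex_bounds_B_U vertex_bounds_B_Q by cases blast+
qed

definition pair_term :: "real ^ ('n set) \<Rightarrow> real" where
  "pair_term v = (\<Sum>x\<in>X. \<Sum>y\<in>X - {x}. 2 * v $ W x y - v $ {i, x, y})"

definition phi :: "real ^ ('n set) \<Rightarrow> real" where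
  "phi v = pair_term v - (real (card X) - 1) * (\<Sum>x\<in>X. orient_lin x v) + (\<Sum>x\<in>X. consistency x v)"

definition beta :: real where
  "beta = (real (card X) - 1) * (\<Sum>x\<in>X. orient_offset x) + (\<Sum>x\<in>X. consistency_bound x)"

lemma phi_minus_beta:
  "phi v - beta = pair_term v - (real (card X) - 1) * (\<Sum>x\<in>X. orient x v)
    + (\<Sum>x\<in>X. consistency x v - consistency_bound x)"
  by (simp add: phi_def beta_def orient_def sum.distrib sum_subtractf algebra_simps)

lemma linear_phi: "linear phi"
proof -
  have nth: "linear (\<lambda>v :: real ^ ('n set). v $ S)" for S
    by (simp add: linear_iff)
  have "linear (orient_lin x)" for x
    by (simp add: orient_lin_def linear_iff split: if_split)
  moreover have "linear (consistency x)" for x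
  proof -
    have "linear (\<lambda>v :: real ^ ('n set). if adjacent G x p then v $ {i, x} - v $ {i, x, p} else v $ {i, x, p} - v $ {i, x})" for p
      by (cases "adjacent G x p") (auto intro!: linear_compose_sub nth)
    then show ?thesis
      unfolding consistency_def
      by (cases "x \<in> C"; cases "U x = {}")
        (simp_all add: linear_compose_add linear_compose_sub linear_compose_sum nth)
  qed
  moreover have "linear pair_term"
    unfolding pair_term_def by (simp add: linear_iff sum.distrib algebra_simps sum_distrib_left sum_subtractf)
  ultimately show ?thesis
    unfolding phi_def by (simp add: linear_iff sum.distrib algebra_simps sum_distrib_left sum_subtractf)
qed

lemma orient_consistency_G:
  assumes x: "x \<in> X" and nc: "no_covered_B"
  shows "orient x (char_imset G) = 0 \<and> consistency x (char_imset G) = consistency_bound x"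
proof -
  consider "x \<in> C" | "x \<in> B" "U x \<noteq> {}" | "x \<in> B" "U x = {}" "Q x \<noteq> {}"
    using x nc X_eq(1) no_covered_B_nonempty by blast
  then show ?thesis
  proof cases
    case 1
    have "char_imset G $ {i, x, p} = 0" if "p \<in> P" for p
      using 1 that char_imset_G_C_P_triple char_imset_G_H_Q_triple(1)[OF x] by (cases "adjacent G x p") (auto simp: Q_def)
    then have "consistency x (char_imset G) = 0"
      using 1 char_imset_G_H_C_pair(1)[OF 1] by (auto simp: consistency_def intro!: sum.neutral)
    then show ?thesis
      using 1 char_imset_G_H_C_pair(1)[OF 1]
      by (simp add: orient_def orient_lin_def orient_offset_def consistency_bound_def)
  next
    case 2
    have "char_imset G $ UF x = 1"
      using char_imset_UF[OF agrees_G 2] B_edge[OF 2(1)] by (simp add: U_iff)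
    then show ?thesis
      using 2 X_eq(2) char_imset_G_H_U_triple(1)[OF 2(1)] char_imset_G_H_Q_triple(1)[OF x]
      by (auto simp: orient_def orient_lin_def orient_offset_def consistency_def consistency_bound_def)
  next
    case 3
    then show ?thesis
      using X_eq(2) char_imset_QF[OF agrees_G x 3(3)] not_into_i_G[OF x] char_imset_G_H_Q_triple(1)[OF x]
      by (auto simp: orient_def orient_lin_def orient_offset_def consistency_def consistency_bound_def)
  qed
qed

lemma orient_consistency_H:
  assumes x: "x \<in> X" and nc: "no_covered_B"
  shows "orient x (char_imset H) = 1 \<and> consistency x (char_imset H) = consistency_bound x"
proof -
  consider "x \<in> C" | "x \<in> B" "U x \<noteq> {}" | "x \<in> B" "U x = {}" "Q x \<noteq> {}"
    using x nc X_eq(1) no_covered_B_nonempty by blast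
  then show ?thesis
  proof cases
    case 1
    have "char_imset H $ {i, x, p} = 1" if "p \<in> P" for p
      using 1 that char_imset_H_C_P_triple char_imset_G_H_Q_triple(2)[OF x] by (cases "adjacent G x p") (auto simp: Q_def)
    then have "consistency x (char_imset H) = 0"
      using 1 char_imset_G_H_C_pair(2)[OF 1] by (auto simp: consistency_def intro!: sum.neutral)
    then show ?thesis
      using 1 char_imset_G_H_C_pair(2)[OF 1]
      by (simp add: orient_def orient_lin_def orient_offset_def consistency_bound_def)
  next
    case 2
    have "char_imset H $ UF x = 0"
      using char_imset_UF[OF agrees_H 2] i_not_parent_Sstar_H[OF X_Sstar[OF x]] by simp
    then show ?thesis
      using 2 X_eq(2) char_imset_G_H_U_triple(2)[OF 2(1)] char_imset_G_H_Q_triple(2)[OF x]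
      by (auto simp: orient_def orient_lin_def orient_offset_def consistency_def consistency_bound_def)
  next
    case 3
    then show ?thesis
      using X_eq(2) char_imset_QF[OF agrees_H x 3(3)] into_i_H[OF x] char_imset_G_H_Q_triple(2)[OF x]
      by (auto simp: orient_def orient_lin_def orient_offset_def consistency_def consistency_bound_def)
  qed
qed

lemma phi_G: "no_covered_B \<Longrightarrow> phi (char_imset G) = beta"
proof -
  assume nc: "no_covered_B"
  have "2 * char_imset G $ W x y - char_imset G $ {i, x, y} = 0" if "x \<in> X" "y \<in> X - {x}" for x y
    using char_imset_W[OF agrees_G, of x y] char_imset_G_H_X_triple(1)[of x y] not_into_i_G that by auto
  then have "pair_term (char_imset G) = 0"
    unfolding pair_term_def by (auto intro!: sum.neutral)
  then have "phi (char_imset G) - beta = 0"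
    using orient_consistency_G[OF _ nc] by (simp add: phi_minus_beta)
  then show ?thesis by simp
qed

lemma phi_H: "no_covered_B \<Longrightarrow> phi (char_imset H) = beta"
proof -
  assume nc: "no_covered_B"
  have "pair_term (char_imset H) = (\<Sum>x\<in>X. \<Sum>y\<in>X - {x}. if x \<in> X \<and> y \<in> X then 1 else 0)"
    using char_imset_W[OF agrees_H] char_imset_G_H_X_triple(2) into_i_H
    unfolding pair_term_def by (intro sum.cong refl) auto
  also have "\<dots> = real (card X) * (real (card X) - 1)"
    by (rule sum_offdiagonal_indicator) auto
  finally have "phi (char_imset H) - beta = 0"
    using orient_consistency_H[OF _ nc] by (simp add: phi_minus_beta)
  then show ?thesis by simp
qed

definition into_i_vertices :: "('n \<times> 'n) set \<Rightarrow> 'n set" where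
  "into_i_vertices E = {x \<in> X. into_i E x}"

lemma pair_term_bound:
  assumes E: "agrees E"
  defines "k \<equiv> real (card (into_i_vertices E))"
  shows "pair_term (char_imset E) \<le> k * (k - 1)"
    and "pair_term (char_imset E) = k * (k - 1) \<Longrightarrow> x \<in> X \<Longrightarrow> y \<in> X \<Longrightarrow> x \<noteq> y \<Longrightarrow>
      char_imset E $ {i, x, y} = (if into_i E x \<and> into_i E y then 1 else 0)"
proof -
  let ?K = "into_i_vertices E"
  define ind where "ind x y = (if x \<in> ?K \<and> y \<in> ?K then 1 else 0 :: real)" for x y
  define t where "t x y = 2 * char_imset E $ W x y - char_imset E $ {i, x, y}" for x y
  have ind_le: "ind x y \<le> char_imset E $ {i, x, y}" and t_eq: "t x y = 2 * ind x y - char_imset E $ {i, x, y}"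
    if "x \<in> X" "y \<in> X - {x}" for x y
    using that char_imset_W[OF E, of x y] char_imset_Sstar_triple[OF E X_Sstar X_Sstar, of x y]
    by (auto simp: ind_def t_def into_i_vertices_def into_i_def)
  then have t_le: "t x y \<le> ind x y" if "x \<in> X" "y \<in> X - {x}" for x y
    using that by fastforce
  have inner_le: "(\<Sum>y\<in>X - {x}. t x y) \<le> (\<Sum>y\<in>X - {x}. ind x y)" if "x \<in> X" for x
    using t_le that by (intro sum_mono) auto
  have ind_sum: "(\<Sum>x\<in>X. \<Sum>y\<in>X - {x}. ind x y) = k * (k - 1)"
    unfolding ind_def k_def by (rule sum_offdiagonal_indicator) (auto simp: into_i_vertices_def)
  have pair: "pair_term (char_imset E) = (\<Sum>x\<in>X. \<Sum>y\<in>X - {x}. t x y)"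
    by (simp add: pair_term_def t_def)
  have "(\<Sum>x\<in>X. \<Sum>y\<in>X - {x}. t x y) \<le> (\<Sum>x\<in>X. \<Sum>y\<in>X - {x}. ind x y)"
    by (rule sum_mono) (rule inner_le)
  then show "pair_term (char_imset E) \<le> k * (k - 1)"
    using pair ind_sum by simp
  assume eq: "pair_term (char_imset E) = k * (k - 1)" and xy: "x \<in> X" "y \<in> X" "x \<noteq> y"
  then have "\<forall>x\<in>X. (\<Sum>y\<in>X - {x}. t x y) = (\<Sum>y\<in>X - {x}. ind x y)"
    using pair ind_sum sum_mono_eq_iff[of X "\<lambda>x. \<Sum>y\<in>X - {x}. t x y", OF _ inner_le] by simp
  then have "t x y = ind x y"
    using xy t_le sum_mono_eq_iff[of "X - {x}" "t x" "ind x"] by simp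
  then show "char_imset E $ {i, x, y} = (if into_i E x \<and> into_i E y then 1 else 0)"
    using xy t_eq[of x y] by (simp add: ind_def into_i_vertices_def)
qed

lemma orient_sum_bound:
  assumes E: "agrees E" and nc: "no_covered_B"
  shows "real (card (into_i_vertices E)) \<le> (\<Sum>x\<in>X. orient x (char_imset E))"
    and "(\<Sum>x\<in>X. orient x (char_imset E)) = real (card (into_i_vertices E)) \<Longrightarrow>
      \<forall>x\<in>X. orient x (char_imset E) = (if into_i E x then 1 else 0)"
proof -
  have le: "(if into_i E x then 1 else 0) \<le> orient x (char_imset E)" if "x \<in> X" for x
    using vertex_bounds[OF E that nc] by (auto simp: vertex_bounds_def)
  have card: "(\<Sum>x\<in>X. if into_i E x then 1 else 0) = real (card (into_i_vertices E))"
    by (simp add: sum.If_cases into_i_vertices_def Int_def conj_commute)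
  show "real (card (into_i_vertices E)) \<le> (\<Sum>x\<in>X. orient x (char_imset E))"
    using sum_mono[of X _ "\<lambda>x. orient x (char_imset E)", OF le] card by simp
  show "(\<Sum>x\<in>X. orient x (char_imset E)) = real (card (into_i_vertices E)) \<Longrightarrow>
      \<forall>x\<in>X. orient x (char_imset E) = (if into_i E x then 1 else 0)"
    using sum_mono_eq_iff[of X _ "\<lambda>x. orient x (char_imset E)", OF _ le] card by auto
qed

lemma consistency_sum_bound:
  assumes E: "agrees E" and nc: "no_covered_B"
  shows "(\<Sum>x\<in>X. consistency x (char_imset E) - consistency_bound x) \<le> 0"
    and "(\<Sum>x\<in>X. consistency x (char_imset E) - consistency_bound x) = 0 \<Longrightarrow> \<forall>x\<in>X. consistent E x"
proof -
  have le: "consistency x (char_imset E) - consistency_bound x \<le> 0" if "x \<in> X" for x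
    using vertex_bounds[OF E that nc] by (simp add: vertex_bounds_def)
  then show "(\<Sum>x\<in>X. consistency x (char_imset E) - consistency_bound x) \<le> 0"
    by (rule sum_nonpos)
  show "(\<Sum>x\<in>X. consistency x (char_imset E) - consistency_bound x) = 0 \<Longrightarrow> \<forall>x\<in>X. consistent E x"
    using sum_mono_eq_iff[of X _ "\<lambda>_. 0", OF _ le] vertex_bounds[OF E _ nc] by (auto simp: vertex_bounds_def)
qed

lemma phi_le_beta:
  assumes E: "agrees E" and nc: "no_covered_B" and X: "X \<noteq> {}"
  shows "phi (char_imset E) \<le> beta"
proof -
  let ?k = "real (card (into_i_vertices E))" and ?L = "\<Sum>x\<in>X. orient x (char_imset E)"
  have "?k * (?k - 1) - (real (card X) - 1) * ?L \<le> 0"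
    using X orient_sum_bound(1)[OF E nc] card_mono[of X "into_i_vertices E"]
    by (intro quadratic_deficit(1)) (auto simp: into_i_vertices_def card_gt_0_iff Suc_le_eq)
  then show ?thesis
    using phi_minus_beta[of "char_imset E"] pair_term_bound(1)[OF E] consistency_sum_bound(1)[OF E nc]
    by linarith
qed

lemma phi_eq_beta_uniform:
  assumes E: "agrees E" and nc: "no_covered_B" and X: "X \<noteq> {}" and eq: "phi (char_imset E) = beta"
  obtains s where "\<And>x. x \<in> X \<Longrightarrow> consistent E x \<and> orient x (char_imset E) = (if s then 1 else 0)"
    and "\<And>x y. x \<in> X \<Longrightarrow> y \<in> X \<Longrightarrow> x \<noteq> y \<Longrightarrow> char_imset E $ {i, x, y} = (if s then 1 else 0)"
proof -
  let ?k = "real (card (into_i_vertices E))" and ?L = "\<Sum>x\<in>X. orient x (char_imset E)"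
  let ?m = "real (card X)"
  have k_le: "0 \<le> ?k" "?k \<le> ?m" "1 \<le> ?m"
    using X card_mono[of X "into_i_vertices E"] by (auto simp: into_i_vertices_def card_gt_0_iff Suc_le_eq)
  note deficit = quadratic_deficit[OF k_le orient_sum_bound(1)[OF E nc]]
  have tight: "pair_term (char_imset E) = ?k * (?k - 1)" "?k * (?k - 1) - (?m - 1) * ?L = 0"
      "(\<Sum>x\<in>X. consistency x (char_imset E) - consistency_bound x) = 0"
    using eq phi_minus_beta[of "char_imset E"] pair_term_bound(1)[OF E] deficit(1)
      consistency_sum_bound(1)[OF E nc] by linarith+
  have consistent: "\<forall>x\<in>X. consistent E x"
    using consistency_sum_bound(2)[OF E nc tight(3)] .
  have k_cases: "?k = 0 \<or> ?k = ?m" and L_cases: "?m = 1 \<or> ?L = ?k"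
    using deficit(2)[OF tight(2)] by auto
  have orient_01: "orient x (char_imset E) \<in> {0, 1}" if "x \<in> X" for x
    using vertex_bounds[OF E that nc] by (simp add: vertex_bounds_def)
  define s where "s \<longleftrightarrow> (\<forall>x\<in>X. orient x (char_imset E) = 1)"
  show ?thesis
  proof (cases "card X = 1")
    case True
    then obtain x0 where "X = {x0}"
      by (rule card_1_singletonE)
    then show ?thesis
      using that[of s] consistent orient_01 by (auto simp: s_def)
  next
    case False
    then have orient_into_i: "\<forall>x\<in>X. orient x (char_imset E) = (if into_i E x then 1 else 0)"
      using L_cases orient_sum_bound(2)[OF E nc] by simp
    have "into_i_vertices E = {} \<or> into_i_vertices E = X"
      using k_cases card_subset_eq[of X "into_i_vertices E"] by (auto simp: into_i_vertices_def)
    then have into_i_iff: "into_i E x \<longleftrightarrow> s" if "x \<in> X" for x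
      using that X orient_into_i by (auto simp: s_def into_i_vertices_def)
    show ?thesis
    proof (rule that)
      fix x assume "x \<in> X"
      then show "consistent E x \<and> orient x (char_imset E) = (if s then 1 else 0)"
        using consistent orient_into_i into_i_iff by simp
    next
      fix x y assume "x \<in> X" "y \<in> X" "x \<noteq> y"
      then show "char_imset E $ {i, x, y} = (if s then 1 else 0)"
        using pair_term_bound(2)[OF E tight(1)] into_i_iff by simp
    qed
  qed
qed

lemma char_imset_uniform:
  assumes E: "agrees E"
    and vertices: "\<And>x. x \<in> X \<Longrightarrow> consistent E x \<and> orient x (char_imset E) = (if s then 1 else 0)"
    and pairs: "\<And>x y. x \<in> X \<Longrightarrow> y \<in> X \<Longrightarrow> x \<noteq> y \<Longrightarrow> char_imset E $ {i, x, y} = (if s then 1 else 0)"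
  shows "char_imset E = (if s then char_imset H else char_imset G)"
proof -
  have "char_imset E $ S = (if s then char_imset H $ S else char_imset G $ S)"
    if card: "card S = 2 \<or> card S = 3" for S
  proof (cases "S \<in> common")
    case True
    then show ?thesis
      using E by (simp add: agrees_def common_def)
  next
    case False
    from card False show ?thesis
    proof (cases rule: differing_set_cases)
      case (C_pair c)
      then show ?thesis
        using vertices[OF C_X] char_imset_G_H_C_pair by (simp add: consistent_def)
    next
      case (X_triple x y)
      then show ?thesis
        using pairs char_imset_G_H_X_triple by simp
    next
      case (Q_triple x p)
      then show ?thesis
        using vertices char_imset_G_H_Q_triple by (simp add: consistent_def)
    next
      case (C_P_triple c p)
      then show ?thesis
        using vertices[OF C_X] char_imset_G_C_P_triple char_imset_H_C_P_triple
        by (simp add: consistent_def)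
    next
      case (U_triple b r)
      then have "b \<notin> C" "b \<in> X"
        using X_eq B_X by auto
      then show ?thesis
        using U_triple vertices char_imset_G_H_U_triple by (simp add: consistent_def)
    qed
  qed
  then show ?thesis
    using char_imset_eqI[OF agrees_acyclic[OF E] acyclic_G] char_imset_eqI[OF agrees_acyclic[OF E] acyclic_H]
    by (cases s) simp_all
qed

lemma H_eq_G_if_X_empty:
  assumes "X = {}"
  shows "H = G"
proof -
  have ji: "(j, i) \<in> G" if "j \<in> Sstar" for j
    using assms that by (auto simp: X_iff)
  then have "(i, j) \<notin> G" if "j \<in> Sstar" for j
    using that acyclic_no_2cycle[OF acyclic_G] by blast
  with ji show ?thesis
    by (auto simp: H_iff)
qed

definition agreement :: "real ^ ('n set) \<Rightarrow> real" where
  "agreement v = (\<Sum>S\<in>common. (2 * char_imset G $ S - 1) * v $ S)"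

lemma linear_agreement: "linear agreement"
  unfolding agreement_def by (intro linear_compose_sum ballI) (simp add: linear_iff algebra_simps)

lemma agreement_le:
  "agreement (char_imset E) \<le> agreement (char_imset G)"
  "acyclic E \<Longrightarrow> agreement (char_imset E) = agreement (char_imset G) \<longleftrightarrow> agrees E"
proof -
  have "finite common" by simp
  note agreement_sum_le[OF this char_imset_nth_01 char_imset_nth_01]
  then show "agreement (char_imset E) \<le> agreement (char_imset G)"
    "acyclic E \<Longrightarrow> agreement (char_imset E) = agreement (char_imset G) \<longleftrightarrow> agrees E"
    by (simp_all add: agreement_def agrees_def)
qed

lemma edge_if_no_covered_B:
  assumes nc: "no_covered_B" and ne: "char_imset G \<noteq> char_imset H"
  shows "is_edge_of (convex hull {char_imset G, char_imset H}) CIM"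
proof -
  define V where "V = {char_imset E | E :: ('n \<times> 'n) set. is_dag E}"
  have "finite V"
    using finite_subset[of V "range char_imset"] by (auto simp: V_def)
  have GH: "char_imset G \<in> V" "char_imset H \<in> V"
    using acyclic_G acyclic_H by (auto simp: V_def is_dag_def)
  have "X \<noteq> {}"
    using ne H_eq_G_if_X_empty by auto
  have phi_le: "phi w \<le> beta" and phi_eq: "phi w = beta \<longleftrightarrow> w = char_imset G \<or> w = char_imset H"
    if "w \<in> V" "agreement w = agreement (char_imset G)" for w
  proof -
    obtain E where E: "w = char_imset E" "acyclic E"
      using \<open>w \<in> V\<close> by (auto simp: V_def is_dag_def)
    then have "agrees E"
      using agreement_le(2) that(2) by blast
    then show "phi w \<le> beta"
      using phi_le_beta[OF _ nc \<open>X \<noteq> {}\<close>] E(1) by blast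
    show "phi w = beta \<longleftrightarrow> w = char_imset G \<or> w = char_imset H"
    proof
      assume "phi w = beta"
      then have "phi (char_imset E) = beta"
        using E(1) by simp
      then obtain s
        where "\<And>x. x \<in> X \<Longrightarrow> consistent E x \<and> orient x (char_imset E) = (if s then 1 else 0)"
          and "\<And>x y. x \<in> X \<Longrightarrow> y \<in> X \<Longrightarrow> x \<noteq> y \<Longrightarrow>
            char_imset E $ {i, x, y} = (if s then 1 else 0)"
        by (rule phi_eq_beta_uniform[OF \<open>agrees E\<close> nc \<open>X \<noteq> {}\<close>]) blast
      then have "char_imset E = (if s then char_imset H else char_imset G)"
        by (rule char_imset_uniform[OF \<open>agrees E\<close>])
      then show "w = char_imset G \<or> w = char_imset H"
        using E(1) by (cases s) simp_all
    qed (use phi_G[OF nc] phi_H[OF nc] in auto)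
  qed
  obtain M where M_le: "\<And>w. w \<in> V \<Longrightarrow> M * agreement w + phi w \<le> M * agreement (char_imset G) + beta"
    and M_eq: "\<And>w. w \<in> V \<Longrightarrow> M * agreement w + phi w = M * agreement (char_imset G) + beta \<longleftrightarrow>
      agreement w = agreement (char_imset G) \<and> phi w = beta"
    using exists_lexicographic_weight[OF \<open>finite V\<close>, of agreement "agreement (char_imset G)" phi beta]
      agreement_le(1) phi_le by (auto simp: V_def)
  have "agreement (char_imset H) = agreement (char_imset G)"
    using agreement_le(2)[OF acyclic_H] agrees_H by simp
  moreover have "linear (\<lambda>v. M * agreement v + phi v)"
    using linear_agreement linear_phi by (simp add: linear_iff algebra_simps)
  ultimately have "is_edge_of (convex hull {char_imset G, char_imset H}) (convex hull V)"
    using \<open>finite V\<close> GH ne M_le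
    by (intro edge_of_convex_hullI[where f = "\<lambda>v. M * agreement v + phi v"]) (auto simp: M_eq phi_eq)
  then show ?thesis
    by (simp add: CIM_def V_def)
qed

text \<open>If some edge i \<rightarrow> b with b \<in> B is covered, reversing it changes neither the
  characteristic imset nor H, and afterwards b is a parent of i that is non-adjacent
  to every vertex of Sstar, so no edge i \<rightarrow> x with x \<in> B is covered any more.\<close>
lemma edge:
  assumes ne: "char_imset G \<noteq> char_imset H"
  shows "is_edge_of (convex hull {char_imset G, char_imset H}) CIM"
proof (cases no_covered_B)
  case True
  then show ?thesis
    using ne by (rule edge_if_no_covered_B)
next
  case False
  then obtain b where b: "b \<in> B" "covered G i b"
    by (auto simp: no_covered_B_def)
  define G' where "G' = insert (b, i) (G - {(i, b)})"
  have bS: "b \<in> Sstar" "b \<noteq> i"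
    using b(1) B_X X_Sstar X_ne_i by auto
  have G': "acyclic G'" "char_imset G' = char_imset G"
    using acyclic_reverse_covered[OF acyclic_G b(2)] char_imset_reverse_covered[OF acyclic_G b(2)]
    by (simp_all add: G'_def)
  interpret G': redirection G' i Sstar H
  proof
    show "\<forall>a\<in>Sstar. \<forall>c\<in>Sstar. (a, c) \<notin> G'"
      using Sstar_independent i_notin_Sstar by (auto simp: G'_def)
    show "H = (G' - {(i, j) | j. j \<in> Sstar}) \<union> {(j, i) | j. j \<in> Sstar}"
      using H_def bS by (auto simp: G'_def)
  qed (use i_notin_Sstar G'(1) acyclic_H in auto)
  have "G'.no_covered_B"
    unfolding G'.no_covered_B_def
  proof (intro ballI notI)
    fix x assume x: "x \<in> G'.B" "covered G' i x"
    have "b \<in> G'.P"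
      unfolding G'.P_iff by (simp add: G'_def)
    moreover have "x \<in> Sstar" "x \<notin> G'.P"
      using x(1) G'.B_X G'.X_Sstar G'.X_notin_P by auto
    ultimately have "(b, x) \<notin> G'"
      using G'.Sstar_independent bS(1) by blast
    then show False
      using x(2) \<open>b \<in> G'.P\<close> by (auto simp: covered_def G'.P_def pa_def)
  qed
  then show ?thesis
    using G'.edge_if_no_covered_B ne G'(2) by simp
qed

end

theorem mainTheorem6:
  fixes G :: "('n::finite \<times> 'n) set" and i :: 'n and Sstar :: "'n set"
  assumes "i \<notin> Sstar"
    and "is_dag G"
    and "\<forall>a\<in>Sstar. \<forall>b\<in>Sstar. (a, b) \<notin> G"
    and "H = (G - {(i, j) | j. j \<in> Sstar}) \<union> {(j, i) | j. j \<in> Sstar}"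
    and "is_dag H"
    and "char_imset G \<noteq> char_imset H"
  shows "is_edge_of (convex hull {char_imset G, char_imset H}) CIM"
proof -
  interpret redirection G i Sstar H
    using assms(1-5) by unfold_locales (simp_all add: is_dag_def)
  show ?thesis
    using assms(6) by (rule edge)
qed

end
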